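(* Let $n\ge1$ be an integer and $\delta\in(0,1)$. Let $K$ be a binomial random variable with parameters $n$ and $p$, and define \[ L_{n,\delta} = \frac{K}{n} + \frac{3}{4}\,\frac{1-\frac{2K}{n}-\sqrt{1+\frac{9}{2\ln\frac{2}{\delta}}\,K\left(1-\frac{K}{n}\right)}}{1+\frac{9n}{8\ln\frac{2}{\delta}}},\qquad U_{n,\delta} = \frac{K}{n} + \frac{3}{4}\,\frac{1-\frac{2K}{n}+\sqrt{1+\frac{9}{2\ln\frac{2}{\delta}}\,K\left(1-\frac{K}{n}\right)}}{1+\frac{9n}{8\ln\frac{2}{\delta}}}. \] For $p\in(0,1)$ define \[ \mathrm{T}^{-}(p) = np + \frac{1-2p-\sqrt{1+\frac{18np(1-p)}{\ln(2/\delta)}}}{\frac{2}{3n}+\frac{3}{\ln(2/\delta)}},\qquad \mathrm{T}^{+}(p) = np + \frac{1-2p+\sqrt{1+\frac{18np(1-p)}{\ln(2/\delta)}}}{\frac{2}{3n}+\frac{3}{\ln(2/\delta)}}, \] and for $k=0,1,\dots,n$ define \[ \mathscr{L}(k) = \frac{k}{n} + \frac{3}{4}\,\frac{1-\frac{2k}{n}-\sqrt{1+\frac{9}{2\ln\frac{2}{\delta}}\,k\left(1-\frac{k}{n}\right)}}{1+\frac{9n}{8\ln\frac{2}{\delta}}},\qquad \mathscr{U}(k) = \frac{k}{n} + \frac{3}{4}\,\frac{1-\frac{2k}{n}+\sqrt{1+\frac{9}{2\ln\frac{2}{\delta}}\,k\left(1-\frac{k}{n}\right)}}{1+\frac{9n}{8\ln\frac{2}{\delta}}}.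 \] For $k\in\{0,\dots,n\}$ with $0<\mathscr{L}(k)<1$ define \[ C_l(k)=\Pr\{\lceil \mathrm{T}^{-}(\mathscr{L}(k))\rceil\le K\le k-1\mid \mathscr{L}(k)\},\qquad C_l'(k)=\Pr\{\lfloor \mathrm{T}^{-}(\mathscr{L}(k))\rfloor+1\le K\le k-1\mid \mathscr{L}(k)\}, \] and for $k\in\{0,\dots,n\}$ with $0<\mathscr{U}(k)<1$ define \[ C_u(k)=\Pr\{k+1\le K\le \lfloor \mathrm{T}^{+}(\mathscr{U}(k))\rfloor\mid \mathscr{U}(k)\},\qquad C_u'(k)=\Pr\{k+1\le K\le \lceil \mathrm{T}^{+}(\mathscr{U}(k))\rceil-1\mid \mathscr{U}(k)\}. \] Then: (I) $\inf_{p\in(0,1)}\Pr\{L_{n,\delta}\le p\le U_{n,\delta}\mid p\}$ equals the minimum of $\{C_l(k):0\le k\le n,\ 0<\mathscr{L}(k)<1\}\cup\{C_u(k):0\le k\le n,\ 0<\mathscr{U}(k)<1\}$. (II) $\inf_{p\in(0,1)}\Pr\{L_{n,\delta}< p< U_{n,\delta}\mid p\}$ equals the minimum of $\{C_l'(k):0\le k\le n,\ 0<\mathscr{L}(k)<1\}\cup\{C_u'(k):0\le k\le n,\ 0<\mathscr{U}(k)<1\}$.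
   Context: $\Pr\{\cdot\mid q\}$ denotes probability when $K$ is binomial with parameters $n$ and success probability $q$. *)

theory Defs
  imports "HOL-Probability.Probability"
begin

text \<open>Lower/upper confidence limit as a function of the observed count k
  (used both for the random limits L, U evaluated at K and for the functions
  script-L, script-U).\<close>
definition confL :: "nat \<Rightarrow> real \<Rightarrow> nat \<Rightarrow> real" where
  "confL n \<delta> k = real k / real n + 3/4 *
     (1 - 2 * real k / real n
        - sqrt (1 + 9 / (2 * ln (2/\<delta>)) * real k * (1 - real k / real n)))
     / (1 + 9 * real n / (8 * ln (2/\<delta>)))"

definition confU :: "nat \<Rightarrow> real \<Rightarrow> nat \<Rightarrow> real" where
  "confU n \<delta> k = real k / real n + 3/4 *
     (1 - 2 * real k / real n
        + sqrt (1 + 9 / (2 * ln (2/\<delta>)) * real k * (1 - real k / real n)))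
     / (1 + 9 * real n / (8 * ln (2/\<delta>)))"

definition Tminus :: "nat \<Rightarrow> real \<Rightarrow> real \<Rightarrow> real" where
  "Tminus n \<delta> p = real n * p +
     (1 - 2 * p - sqrt (1 + 18 * real n * p * (1 - p) / ln (2/\<delta>)))
     / (2 / (3 * real n) + 3 / ln (2/\<delta>))"

definition Tplus :: "nat \<Rightarrow> real \<Rightarrow> real \<Rightarrow> real" where
  "Tplus n \<delta> p = real n * p +
     (1 - 2 * p + sqrt (1 + 18 * real n * p * (1 - p) / ln (2/\<delta>)))
     / (2 / (3 * real n) + 3 / ln (2/\<delta>))"

definition Cl :: "nat \<Rightarrow> real \<Rightarrow> nat \<Rightarrow> real" where
  "Cl n \<delta> k = measure_pmf.prob (binomial_pmf n (confL n \<delta> k))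
     {K. \<lceil>Tminus n \<delta> (confL n \<delta> k)\<rceil> \<le> int K \<and> int K \<le> int k - 1}"

definition Cl' :: "nat \<Rightarrow> real \<Rightarrow> nat \<Rightarrow> real" where
  "Cl' n \<delta> k = measure_pmf.prob (binomial_pmf n (confL n \<delta> k))
     {K. \<lfloor>Tminus n \<delta> (confL n \<delta> k)\<rfloor> + 1 \<le> int K \<and> int K \<le> int k - 1}"

definition Cu :: "nat \<Rightarrow> real \<Rightarrow> nat \<Rightarrow> real" where
  "Cu n \<delta> k = measure_pmf.prob (binomial_pmf n (confU n \<delta> k))
     {K. int k + 1 \<le> int K \<and> int K \<le> \<lfloor>Tplus n \<delta> (confU n \<delta> k)\<rfloor>}"

definition Cu' :: "nat \<Rightarrow> real \<Rightarrow> nat \<Rightarrow> real" where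
  "Cu' n \<delta> k = measure_pmf.prob (binomial_pmf n (confU n \<delta> k))
     {K. int k + 1 \<le> int K \<and> int K \<le> \<lceil>Tplus n \<delta> (confU n \<delta> k)\<rceil> - 1}"

end

theory Submission
  imports Defs "HOL-Analysis.Weierstrass_Theorems"
begin

text \<open>Both pairs of limits are the two branches of one quadratic curve \<open>Q k p = 0\<close>, solved
  once for \<open>p\<close> (giving \<open>L\<close>, \<open>U\<close>) and once for \<open>k\<close> (giving \<open>T\<^sup>-\<close>, \<open>T\<^sup>+\<close>); hence
  \<open>L k \<le> p \<longleftrightarrow> k \<le> T\<^sup>+ p\<close> and \<open>p \<le> U k \<longleftrightarrow> T\<^sup>- p \<le> k\<close>, also with strict inequalities.
  For fixed \<open>p\<close> the coverage event is therefore \<open>a \<le> K \<le> b\<close> for an integer interval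
  \<open>[a, b]\<close>, and its probability is a sum of consecutive Bernstein polynomials in \<open>p\<close>.  Such a
  sum is quasi-concave, its derivative \<open>n (B\<^bsub>n-1,a-1\<^esub> - B\<^bsub>n-1,b\<^esub>)\<close> changing sign at most
  once.  So the coverage at \<open>p\<close> is at least the smaller of the values of this sum at
  \<open>U (a - 1) \<le> p\<close> (or \<open>0\<close>) and at \<open>L (b + 1) \<ge> p\<close> (or \<open>1\<close>), and these values dominate the
  critical values \<open>C\<^sub>u (a - 1)\<close> and \<open>C\<^sub>l (b + 1)\<close> (or equal \<open>1\<close>).
  Conversely every critical value is a one-sided limit (closed interval) or a value (open
  interval) of the coverage probability.\<close>

section \<open>Quasi-concavity of binomial interval probabilities\<close>

definition Bernstein_prev :: "nat \<Rightarrow> nat \<Rightarrow> real \<Rightarrow> real" where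
  "Bernstein_prev n k x = (if k = 0 then 0 else Bernstein (n - 1) (k - 1) x)"

lemma Bernstein_prev_Suc: "Bernstein_prev n (Suc k) x = Bernstein (n - 1) k x"
  by (simp add: Bernstein_prev_def)

lemma has_field_derivative_Bernstein:
  "(Bernstein n k has_field_derivative
      real n * (Bernstein_prev n k x - Bernstein_prev n (Suc k) x)) (at x)"
proof -
  have deriv: "(Bernstein n k has_field_derivative
      real (n choose k) * (real k * x^(k - 1) * (1 - x)^(n - k))
      - real (n choose k) * (x^k * (real (n - k) * (1 - x)^(n - k - 1)))) (at x)"
    unfolding Bernstein_def[abs_def] by (auto intro!: derivative_eq_intros simp: algebra_simps)
  have "real (n choose k) * (real k * x^(k - 1) * (1 - x)^(n - k)) = real n * Bernstein_prev n k x"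
  proof (cases k)
    case (Suc j)
    have binom: "real k * real (n choose k) = real n * real ((n - 1) choose j)"
      using times_binomial_minus1_eq[of k n] Suc by (metis of_nat_mult diff_Suc_1 zero_less_Suc)
    have "real (n choose k) * (real k * x^(k - 1) * (1 - x)^(n - k))
          = (real k * real (n choose k)) * (x^j * (1 - x)^(n - k))"
      using Suc by (simp add: algebra_simps)
    also have "\<dots> = real n * (real ((n - 1) choose j) * x^j * (1 - x)^(n - k))"
      by (simp add: binom algebra_simps)
    also have "\<dots> = real n * Bernstein_prev n k x"
      using Suc by (simp add: Bernstein_prev_def Bernstein_def)
    finally show ?thesis .
  qed (simp add: Bernstein_prev_def)
  moreover have "real (n choose k) * (x^k * (real (n - k) * (1 - x)^(n - k - 1)))
                 = real n * Bernstein_prev n (Suc k) x"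
  proof -
    have "real (n - k) * real (n choose k) = real n * real ((n - 1) choose k)"
      by (metis of_nat_mult binomial_absorb_comp)
    moreover have "n - k - 1 = n - 1 - k" by simp
    ultimately show ?thesis
      by (simp add: Bernstein_prev_Suc Bernstein_def algebra_simps)
  qed
  ultimately show ?thesis
    using deriv by (simp add: right_diff_distrib)
qed

lemma has_field_derivative_sum_Bernstein:
  assumes "a \<le> Suc b"
  shows "((\<lambda>x. \<Sum>k=a..b. Bernstein n k x) has_field_derivative
           real n * (Bernstein_prev n a x - Bernstein_prev n (Suc b) x)) (at x)"
proof -
  have "(\<Sum>k=a..b. real n * (Bernstein_prev n k x - Bernstein_prev n (Suc k) x))
        = real n * (Bernstein_prev n a x - Bernstein_prev n (Suc b) x)"
    using sum_Suc_diff[OF assms, of "\<lambda>k. Bernstein_prev n k x"]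
    by (simp add: sum_distrib_left[symmetric] sum_subtractf)
  moreover have "((\<lambda>x. \<Sum>k=a..b. Bernstein n k x) has_field_derivative
      (\<Sum>k=a..b. real n * (Bernstein_prev n k x - Bernstein_prev n (Suc k) x))) (at x)"
    by (intro DERIV_sum has_field_derivative_Bernstein)
  ultimately show ?thesis by simp
qed

text \<open>For \<open>a \<le> b\<close> the ratio \<open>Bernstein_prev n a / Bernstein_prev n (Suc b)\<close> is
  a multiple of \<open>((1 - x) / x) ^ (b + 1 - a)\<close>, hence decreasing on \<open>(0, 1)\<close>.\<close>

lemma Bernstein_prev_less_mono:
  assumes ab: "a \<le> b" "b \<le> n" and xy: "0 < x" "x < y" "y < 1"
    and less: "Bernstein_prev n a x < Bernstein_prev n (Suc b) x"
  shows "Bernstein_prev n a y < Bernstein_prev n (Suc b) y"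
proof (cases a)
  case 0
  then show ?thesis
    using less xy by (simp add: Bernstein_prev_def Bernstein_def zero_less_mult_iff)
next
  case (Suc a')
  have "b \<noteq> n"
  proof
    assume "b = n"
    then have "Bernstein_prev n (Suc b) x = 0"
      using Suc ab by (simp add: Bernstein_prev_Suc Bernstein_def)
    then show False
      using less xy Bernstein_nonneg[of x "n - 1" "a - 1"]
      by (auto simp: Bernstein_prev_def split: if_splits)
  qed
  define d where "d = b - a'"
  define C1 where "C1 = real ((n - 1) choose a')"
  define C2 where "C2 = real ((n - 1) choose b)"
  have d: "b = a' + d" "n - 1 - a' = (n - 1 - b) + d"
    using Suc ab \<open>b \<noteq> n\<close> unfolding d_def by simp_all
  have split: "Bernstein_prev n (Suc b) z - Bernstein_prev n a z
               = z^a' * (1 - z)^(n - 1 - b) * (C2 * z^d - C1 * (1 - z)^d)" for z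
    unfolding Bernstein_prev_def Bernstein_def C1_def C2_def using Suc d
    by (simp add: power_add algebra_simps)
  have pos: "0 < z^a' * (1 - z)^(n - 1 - b)" if "0 < z" "z < 1" for z :: real
    using that by simp
  have "0 < x^a' * (1 - x)^(n - 1 - b) * (C2 * x^d - C1 * (1 - x)^d)"
    using less split[of x] by simp
  then have "0 < C2 * x^d - C1 * (1 - x)^d"
    using pos[of x] xy by (metis zero_less_mult_pos less_trans)
  moreover have "C2 * x^d \<le> C2 * y^d" "C1 * (1 - y)^d \<le> C1 * (1 - x)^d"
    using xy unfolding C1_def C2_def by (simp_all add: mult_left_mono power_mono)
  ultimately have "0 < C2 * y^d - C1 * (1 - y)^d"
    by linarith
  then have "0 < y^a' * (1 - y)^(n - 1 - b) * (C2 * y^d - C1 * (1 - y)^d)"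
    using pos[of y] xy by simp
  then show ?thesis
    using split[of y] by simp
qed

lemma sum_Bernstein_quasiconcave:
  assumes ab: "a \<le> b" "b \<le> n" and rps: "0 \<le> r" "r \<le> p" "p \<le> s" "s \<le> 1"
  shows "min (\<Sum>k=a..b. Bernstein n k r) (\<Sum>k=a..b. Bernstein n k s) \<le> (\<Sum>k=a..b. Bernstein n k p)"
proof (rule ccontr)
  define S where "S x = (\<Sum>k=a..b. Bernstein n k x)" for x
  define S' where "S' x = real n * (Bernstein_prev n a x - Bernstein_prev n (Suc b) x)" for x
  have deriv: "(S has_field_derivative S' x) (at x)" for x
    unfolding S_def S'_def using ab by (intro has_field_derivative_sum_Bernstein) simp
  assume "\<not> ?thesis"
  then have dip: "S p < S r" "S p < S s"
    unfolding S_def by auto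
  then have "r < p" "p < s"
    using rps by (auto simp: order.order_iff_strict)
  obtain y where y: "r < y" "y < p" "S p - S r = (p - r) * S' y"
    using MVT2[OF \<open>r < p\<close> deriv] by blast
  obtain z where z: "p < z" "z < s" "S s - S p = (s - p) * S' z"
    using MVT2[OF \<open>p < s\<close> deriv] by blast
  have "(p - r) * S' y < 0"
    using y dip by simp
  then have "S' y < 0"
    using \<open>r < p\<close> by (simp add: mult_less_0_iff)
  then have "0 < n" "Bernstein_prev n a y < Bernstein_prev n (Suc b) y"
    unfolding S'_def by (simp_all add: mult_less_0_iff)
  then have "Bernstein_prev n a z < Bernstein_prev n (Suc b) z"
    by (intro Bernstein_prev_less_mono[OF ab, of y z]) (use y z rps in auto)
  then have "S' z < 0"
    unfolding S'_def using \<open>0 < n\<close> by (simp add: mult_less_0_iff)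
  then have "(s - p) * S' z < 0"
    using \<open>p < s\<close> by (simp add: mult_pos_neg)
  then show False
    using z dip by linarith
qed

lemma prob_binomial_pmf_eq_sum_Bernstein:
  assumes "0 \<le> q" "q \<le> 1"
  shows "measure_pmf.prob (binomial_pmf n q) A = (\<Sum>k\<in>A \<inter> {..n}. Bernstein n k q)"
proof -
  have "set_pmf (binomial_pmf n q) \<subseteq> {..n}"
    using assms by (auto simp: set_pmf_binomial_eq)
  then have "A \<inter> set_pmf (binomial_pmf n q) = (A \<inter> {..n}) \<inter> set_pmf (binomial_pmf n q)"
    by blast
  then have "measure_pmf.prob (binomial_pmf n q) A
             = measure_pmf.prob (binomial_pmf n q) (A \<inter> {..n})"
    by (metis measure_Int_set_pmf)
  also have "\<dots> = (\<Sum>k\<in>A \<inter> {..n}. Bernstein n k q)"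
    using assms by (simp add: measure_measure_pmf_finite Bernstein_def)
  finally show ?thesis .
qed

lemma prob_binomial_pmf_mono:
  assumes "0 \<le> q" "q \<le> 1" "A \<inter> {..n} \<subseteq> B"
  shows "measure_pmf.prob (binomial_pmf n q) A \<le> measure_pmf.prob (binomial_pmf n q) B"
  unfolding prob_binomial_pmf_eq_sum_Bernstein[OF assms(1,2)]
  using assms by (intro sum_mono2) (auto intro: Bernstein_nonneg)

lemma prob_binomial_pmf_quasiconcave:
  assumes "a \<le> b" "b \<le> n" "0 \<le> r" "r \<le> p" "p \<le> s" "s \<le> 1"
  shows "min (measure_pmf.prob (binomial_pmf n r) {a..b})
             (measure_pmf.prob (binomial_pmf n s) {a..b})
         \<le> measure_pmf.prob (binomial_pmf n p) {a..b}"
proof -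
  have "{a..b} \<inter> {..n} = {a..b}" using assms(2) by auto
  then show ?thesis
    using sum_Bernstein_quasiconcave[OF assms] assms
    by (simp add: prob_binomial_pmf_eq_sum_Bernstein)
qed

lemma tendsto_prob_binomial_pmf:
  assumes "0 < s" "s < 1"
  shows "((\<lambda>q. measure_pmf.prob (binomial_pmf n q) A) \<longlongrightarrow> measure_pmf.prob (binomial_pmf n s) A)
           (at s)"
proof -
  define B where "B q = (\<Sum>k\<in>A \<inter> {..n}. Bernstein n k q)" for q
  have "(B \<longlongrightarrow> B s) (at s)"
    unfolding B_def Bernstein_def by (intro tendsto_intros)
  moreover have "eventually (\<lambda>q. q \<in> {0<..<1}) (at s)"
    using assms by (intro eventually_at_in_open') auto
  then have "eventually (\<lambda>q. B q = measure_pmf.prob (binomial_pmf n q) A) (at s)"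
    by eventually_elim (simp add: B_def prob_binomial_pmf_eq_sum_Bernstein)
  ultimately have "((\<lambda>q. measure_pmf.prob (binomial_pmf n q) A) \<longlongrightarrow> B s) (at s)"
    by (rule Lim_transform_eventually)
  then show ?thesis
    using assms by (simp add: B_def prob_binomial_pmf_eq_sum_Bernstein)
qed

lemma prob_binomial_pmf_cong:
  assumes "0 \<le> q" "q \<le> 1" "A \<inter> {..n} = B \<inter> {..n}"
  shows "measure_pmf.prob (binomial_pmf n q) A = measure_pmf.prob (binomial_pmf n q) B"
  using assms by (simp add: prob_binomial_pmf_eq_sum_Bernstein)

lemma prob_binomial_pmf_0: "0 \<in> A \<Longrightarrow> measure_pmf.prob (binomial_pmf n 0) A = 1"
  by (subst prob_binomial_pmf_eq_sum_Bernstein) (auto simp: Bernstein_def intro: sum.neutral)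

lemma prob_binomial_pmf_1: "n \<in> A \<Longrightarrow> measure_pmf.prob (binomial_pmf n 1) A = 1"
proof -
  assume "n \<in> A"
  have "(\<Sum>k\<in>A \<inter> {..n}. Bernstein n k 1) = (\<Sum>k\<in>A \<inter> {..n}. if k = n then 1 else 0)"
    by (intro sum.cong) (auto simp: Bernstein_def)
  then show ?thesis
    using \<open>n \<in> A\<close> by (simp add: prob_binomial_pmf_eq_sum_Bernstein)
qed

lemma INF_le_limit:
  fixes f g :: "'a \<Rightarrow> real"
  assumes "F \<noteq> bot" "bdd_below (f ` A)"
    and "eventually (\<lambda>x. x \<in> A \<and> f x \<le> g x) F" "(g \<longlongrightarrow> l) F"
  shows "(INF x\<in>A. f x) \<le> l"
proof -
  have "eventually (\<lambda>x. (INF x\<in>A. f x) \<le> g x) F"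
    using assms(3) by eventually_elim (use assms(2) in \<open>auto intro: cINF_lower2\<close>)
  then show ?thesis
    using tendsto_le[OF assms(1,4) tendsto_const] by blast
qed

lemma INF_eq_Min_of_bounds:
  fixes f :: "'a \<Rightarrow> real"
  assumes "finite C" "A \<noteq> {}"
    and lower: "\<And>x. x \<in> A \<Longrightarrow> \<exists>c\<in>C. c \<le> f x"
    and upper: "\<And>c. c \<in> C \<Longrightarrow> (INF x\<in>A. f x) \<le> c"
  shows "(INF x\<in>A. f x) = Min C"
proof -
  have "C \<noteq> {}" using lower assms(2) by blast
  then have "(INF x\<in>A. f x) \<le> Min C"
    using upper Min_in[OF assms(1)] by blast
  moreover have "Min C \<le> (INF x\<in>A. f x)"
    using assms(2) lower Min_le[OF assms(1)] by (intro cINF_greatest) (meson order_trans)+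
  ultimately show ?thesis by simp
qed

section \<open>Duality between the confidence limits and \<open>T\<^sup>\<plusminus>\<close>\<close>

text \<open>\<open>cmp False\<close> is \<open>(\<le>)\<close> and \<open>cmp True\<close> is \<open>(<)\<close>; this lets parts (I) and (II) of the
  theorem be proved together.\<close>

definition cmp :: "bool \<Rightarrow> real \<Rightarrow> real \<Rightarrow> bool" where
  "cmp strict x y \<longleftrightarrow> (if strict then x < y else x \<le> y)"

lemma cmp_if_less: "x < y \<Longrightarrow> cmp strict x y"
  by (auto simp: cmp_def)

lemma cmp_le_trans: "cmp strict x y \<Longrightarrow> y \<le> z \<Longrightarrow> cmp strict x z"
  by (auto simp: cmp_def split: if_splits)

lemma le_cmp_trans: "x \<le> y \<Longrightarrow> cmp strict y z \<Longrightarrow> cmp strict x z"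
  by (auto simp: cmp_def split: if_splits)

lemma not_cmp_imp_le: "\<not> cmp strict x y \<Longrightarrow> y \<le> x"
  by (auto simp: cmp_def split: if_splits)

text \<open>The abstract core of the duality: \<open>x\<close> and \<open>y\<close> complete the square of the same
  quadratic \<open>Q\<close> in two different variables.\<close>

lemma cmp_band_transfer:
  fixes a b x y R R' Q :: real
  assumes "0 < a" "0 < b" "0 < R" "0 < R'"
    and x: "a * Q = x\<^sup>2 - R\<^sup>2" and y: "b * Q = y\<^sup>2 - R'\<^sup>2"
    and opposite: "0 \<le> Q \<Longrightarrow> (0 \<le> x \<longleftrightarrow> y \<le> 0)"
  shows "(cmp strict (-R) x \<longleftrightarrow> cmp strict y R') \<and> (cmp strict x R \<longleftrightarrow> cmp strict (-R') y)"
proof -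
  have "0 \<le> Q \<longleftrightarrow> 0 \<le> a * Q" "0 \<le> Q \<longleftrightarrow> 0 \<le> b * Q"
       "Q = 0 \<longleftrightarrow> a * Q = 0" "Q = 0 \<longleftrightarrow> b * Q = 0"
    using assms(1,2) by (simp_all add: zero_le_mult_iff)
  then have "R \<le> \<bar>x\<bar> \<longleftrightarrow> 0 \<le> Q" "R' \<le> \<bar>y\<bar> \<longleftrightarrow> 0 \<le> Q"
      and "\<bar>x\<bar> = R \<longleftrightarrow> Q = 0" "\<bar>y\<bar> = R' \<longleftrightarrow> Q = 0"
    using abs_le_square_iff[of R x] abs_le_square_iff[of R' y] x y assms(3,4)
      power2_eq_iff_nonneg[of "\<bar>x\<bar>" R] power2_eq_iff_nonneg[of "\<bar>y\<bar>" R']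
    by simp_all
  then consider "\<bar>x\<bar> < R" "\<bar>y\<bar> < R'"
    | "0 \<le> x" "R \<le> x" "y \<le> -R'" "x = R \<longleftrightarrow> y = -R'"
    | "x < 0" "x \<le> -R" "R' \<le> y" "x = -R \<longleftrightarrow> y = R'"
    using opposite assms(3,4) by (cases "0 \<le> Q"; cases "0 \<le> x") (auto simp: abs_if split: if_splits)
  then show ?thesis
    using assms(3,4) by cases (auto simp: cmp_def)
qed

lemma cmp_scale_iff:
  assumes "0 < a" "a * (y - x) = v - u" shows "cmp strict x y \<longleftrightarrow> cmp strict u v"
proof -
  have "x < y \<longleftrightarrow> 0 < a * (y - x)" "x \<le> y \<longleftrightarrow> 0 \<le> a * (y - x)"
    using assms(1) by (simp_all add: zero_less_mult_iff zero_le_mult_iff)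
  then show ?thesis using assms(2) by (auto simp: cmp_def)
qed

text \<open>The parameter \<open>c\<close> stands for \<open>ln (2 / \<delta>)\<close>; \<open>Tm\<close> and \<open>Tp\<close> are \<open>T\<^sup>-\<close> and \<open>T\<^sup>+\<close>.\<close>

locale confidence_limits =
  fixes n :: nat and c :: real
  assumes n_pos: "1 \<le> n" and c_pos: "0 < c"
begin

definition L :: "real \<Rightarrow> real" where
  "L k = k / real n + 3/4 * (1 - 2 * k / real n - sqrt (1 + 9 / (2 * c) * k * (1 - k / real n)))
           / (1 + 9 * real n / (8 * c))"

definition U :: "real \<Rightarrow> real" where
  "U k = k / real n + 3/4 * (1 - 2 * k / real n + sqrt (1 + 9 / (2 * c) * k * (1 - k / real n)))
           / (1 + 9 * real n / (8 * c))"

definition Tm :: "real \<Rightarrow> real" where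
  "Tm p = real n * p + (1 - 2 * p - sqrt (1 + 18 * real n * p * (1 - p) / c))
            / (2 / (3 * real n) + 3 / c)"

definition Tp :: "real \<Rightarrow> real" where
  "Tp p = real n * p + (1 - 2 * p + sqrt (1 + 18 * real n * p * (1 - p) / c))
            / (2 / (3 * real n) + 3 / c)"

lemma real_n_pos: "0 < real n"
  using n_pos by simp

text \<open>\<open>Q k p \<le> 0\<close> describes the confidence region; \<open>Gp\<close> and \<open>Gk\<close> complete the square of
  \<open>Q\<close> in \<open>p\<close> and in \<open>k\<close>.\<close>

definition Q :: "real \<Rightarrow> real \<Rightarrow> real" where
  "Q k p = (2*c + 9*real n) * (k - real n*p)\<^sup>2 - 6*real n*c*(1 - 2*p)*(k - real n*p)
           - 18*(real n)\<^sup>2*c*p*(1 - p)"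

definition Gp :: "real \<Rightarrow> real \<Rightarrow> real" where
  "Gp k p = (8*c + 9*real n)*(real n*p - k) - 6*c*(real n - 2*k)"

definition Gk :: "real \<Rightarrow> real \<Rightarrow> real" where
  "Gk k p = (2*c + 9*real n)*(k - real n*p) - 3*real n*c*(1 - 2*p)"

definition definite_form :: "real \<Rightarrow> real \<Rightarrow> real" where
  "definite_form a b = (2*c + 9*real n)*(a - real n*b)\<^sup>2 + 12*real n*c*b*(a - real n*b)
                       + 18*(real n)\<^sup>2*c*b\<^sup>2"

lemma definite_form_pos:
  assumes "b \<noteq> 0" shows "0 < definite_form a b"
proof -
  have "(2*c + 9*real n) * definite_form a b
        = ((2*c + 9*real n)*(a - real n*b) + 6*real n*c*b)\<^sup>2 + 162*(real n)^3*c*b\<^sup>2"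
    unfolding definite_form_def power2_eq_square by (simp add: algebra_simps power3_eq_cube)
  moreover have "0 < 162*(real n)^3*c*b\<^sup>2"
    using real_n_pos c_pos assms by simp
  ultimately have "0 < (2*c + 9*real n) * definite_form a b"
    by (metis add_nonneg_pos zero_le_power2)
  then show ?thesis
    using real_n_pos c_pos by (simp add: zero_less_mult_iff)
qed

lemma definite_form_nonneg: "0 \<le> definite_form a b"
proof (cases "b = 0")
  case True
  then show ?thesis using c_pos by (simp add: definite_form_def)
next
  case False
  then show ?thesis using definite_form_pos less_imp_le by blast
qed

text \<open>On \<open>Q k p \<ge> 0\<close> the two completed squares have opposite signs: \<open>Q\<close> is
  a combination of \<open>Gk\<close> and \<open>Gp\<close> with a positive definite remainder, in two ways.\<close>

lemma Gp_nonneg_iff_Gk_nonpos: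
  assumes k: "0 \<le> k" "k \<le> real n" and p: "0 < p" "p < 1" and Q: "0 \<le> Q k p"
  shows "0 \<le> Gp k p \<longleftrightarrow> Gk k p \<le> 0"
proof
  assume Gp: "0 \<le> Gp k p"
  show "Gk k p \<le> 0"
  proof (rule ccontr)
    assume "\<not> Gk k p \<le> 0"
    then have "0 \<le> Gk k p * (real n - k)" using k by simp
    moreover have "0 \<le> real n * Gp k p * (1 - p)" using Gp p real_n_pos by simp
    moreover have "0 < definite_form (real n - k) (1 - p)" using p by (intro definite_form_pos) simp
    moreover have "Q k p + 2*Gk k p*(real n - k) + 2*real n*Gp k p*(1 - p)
                   + definite_form (real n - k) (1 - p) = 0"
      unfolding Q_def Gk_def Gp_def definite_form_def power2_eq_square by (simp add: algebra_simps)
    ultimately show False using Q by linarith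
  qed
next
  assume Gk: "Gk k p \<le> 0"
  show "0 \<le> Gp k p"
  proof (rule ccontr)
    assume "\<not> 0 \<le> Gp k p"
    then have "real n * Gp k p * p < 0" using p real_n_pos by (simp add: mult_pos_neg mult_neg_pos)
    moreover have "Gk k p * k \<le> 0" using k Gk by (simp add: mult_nonpos_nonneg)
    moreover have "Q k p - 2*Gk k p*k - 2*real n*Gp k p*p + definite_form k p = 0"
      unfolding Q_def Gk_def Gp_def definite_form_def power2_eq_square by (simp add: algebra_simps)
    ultimately show False using Q definite_form_nonneg[of k p] by linarith
  qed
qed

definition rad_L :: "real \<Rightarrow> real" where
  "rad_L k = 1 + 9 / (2 * c) * k * (1 - k / real n)"

definition rad_T :: "real \<Rightarrow> real" where
  "rad_T p = 1 + 18 * real n * p * (1 - p) / c"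

lemma rad_L_ge_1: "0 \<le> k \<Longrightarrow> k \<le> real n \<Longrightarrow> 1 \<le> rad_L k"
  unfolding rad_L_def using real_n_pos c_pos by (simp add: field_simps mult_left_mono)

lemma rad_T_ge_1: "0 \<le> p \<Longrightarrow> p \<le> 1 \<Longrightarrow> 1 \<le> rad_T p"
  unfolding rad_T_def using real_n_pos c_pos by simp

lemma Q_eq_Gp_square:
  assumes "0 \<le> k" "k \<le> real n"
  shows "(8*c + 9*real n) * Q k p = (Gp k p)\<^sup>2 - (6*real n*c * sqrt (rad_L k))\<^sup>2"
proof -
  have "(6*real n*c * sqrt (rad_L k))\<^sup>2 = 36*(real n)\<^sup>2*c\<^sup>2 * rad_L k"
    using rad_L_ge_1[OF assms] by (simp add: power_mult_distrib)
  also have "\<dots> = 36*(real n)\<^sup>2*c\<^sup>2 + 162*real n*c*k*(real n - k)"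
    unfolding rad_L_def using real_n_pos c_pos by (simp add: field_simps power2_eq_square)
  finally show ?thesis
    unfolding Q_def Gp_def power2_eq_square by (simp add: algebra_simps)
qed

lemma Q_eq_Gk_square:
  assumes "0 \<le> p" "p \<le> 1"
  shows "(2*c + 9*real n) * Q k p = (Gk k p)\<^sup>2 - (3*real n*c * sqrt (rad_T p))\<^sup>2"
proof -
  have "(3*real n*c * sqrt (rad_T p))\<^sup>2 = 9*(real n)\<^sup>2*c\<^sup>2 * rad_T p"
    using rad_T_ge_1[OF assms] by (simp add: power_mult_distrib)
  also have "\<dots> = 9*(real n)\<^sup>2*c\<^sup>2 + 162*(real n)^3*c*p*(1 - p)"
    unfolding rad_T_def using real_n_pos c_pos
    by (simp add: field_simps power2_eq_square power3_eq_cube)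
  finally show ?thesis
    unfolding Q_def Gk_def power2_eq_square by (simp add: algebra_simps power3_eq_cube)
qed

lemma limit_denominators:
  "3/4 * x / (1 + 9 * real n / (8 * c)) = 6*c*x / (8*c + 9*real n)"
  "x / (2 / (3 * real n) + 3 / c) = 3*real n*c*x / (2*c + 9*real n)"
  using real_n_pos c_pos by (simp_all add: field_simps)

lemma L_scaled: "real n * (8*c + 9*real n) * (p - L k) = Gp k p - (- 6*real n*c * sqrt (rad_L k))"
proof -
  have "N * A * (p - (k / N + 6*c*(1 - 2*k/N - w) / A))
        = A*(N*p - k) - 6*c*(N - 2*k) + 6*N*c*w" if "0 < N" "0 < A" for N A w :: real
    using that by (simp add: field_simps)
  moreover have "0 < 8*c + 9*real n" using real_n_pos c_pos by simp
  ultimately show ?thesis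
    unfolding L_def limit_denominators Gp_def rad_L_def[symmetric] using real_n_pos by simp
qed

lemma U_scaled: "real n * (8*c + 9*real n) * (U k - p) = 6*real n*c * sqrt (rad_L k) - Gp k p"
proof -
  have "N * A * ((k / N + 6*c*(1 - 2*k/N + w) / A) - p)
        = 6*N*c*w - (A*(N*p - k) - 6*c*(N - 2*k))" if "0 < N" "0 < A" for N A w :: real
    using that by (simp add: field_simps)
  moreover have "0 < 8*c + 9*real n" using real_n_pos c_pos by simp
  ultimately show ?thesis
    unfolding U_def limit_denominators Gp_def rad_L_def[symmetric] using real_n_pos by simp
qed

lemma Tp_scaled: "(2*c + 9*real n) * (Tp p - k) = 3*real n*c * sqrt (rad_T p) - Gk k p"
proof -
  have "0 < 2*c + 9*real n" using real_n_pos c_pos by simp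
  then show ?thesis
    unfolding Tp_def limit_denominators Gk_def rad_T_def[symmetric] by (simp add: field_simps)
qed

lemma Tm_scaled: "(2*c + 9*real n) * (k - Tm p) = Gk k p - (- 3*real n*c * sqrt (rad_T p))"
proof -
  have "0 < 2*c + 9*real n" using real_n_pos c_pos by simp
  then show ?thesis
    unfolding Tm_def limit_denominators Gk_def rad_T_def[symmetric] by (simp add: field_simps)
qed

lemma cmp_limits_iff:
  assumes k: "0 \<le> k" "k \<le> real n" and p: "0 < p" "p < 1"
  shows "(cmp strict (L k) p \<longleftrightarrow> cmp strict k (Tp p)) \<and>
         (cmp strict p (U k) \<longleftrightarrow> cmp strict (Tm p) k)"
proof -
  define R where "R = 6*real n*c * sqrt (rad_L k)"
  define R' where "R' = 3*real n*c * sqrt (rad_T p)"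
  have "0 < R" "0 < R'"
    unfolding R_def R'_def using rad_L_ge_1[OF k] rad_T_ge_1[of p] p real_n_pos c_pos by simp_all
  have pos: "0 < 8*c + 9*real n" "0 < 2*c + 9*real n" "0 < real n * (8*c + 9*real n)"
    using real_n_pos c_pos by simp_all
  have "cmp strict (L k) p \<longleftrightarrow> cmp strict (-R) (Gp k p)"
    using cmp_scale_iff[OF pos(3) L_scaled] unfolding R_def by simp
  moreover have "cmp strict p (U k) \<longleftrightarrow> cmp strict (Gp k p) R"
    using cmp_scale_iff[OF pos(3) U_scaled] unfolding R_def .
  moreover have "cmp strict k (Tp p) \<longleftrightarrow> cmp strict (Gk k p) R'"
    using cmp_scale_iff[OF pos(2) Tp_scaled] unfolding R'_def .
  moreover have "cmp strict (Tm p) k \<longleftrightarrow> cmp strict (-R') (Gk k p)"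
    using cmp_scale_iff[OF pos(2) Tm_scaled] unfolding R'_def by simp
  moreover have "(cmp strict (-R) (Gp k p) \<longleftrightarrow> cmp strict (Gk k p) R') \<and>
                 (cmp strict (Gp k p) R \<longleftrightarrow> cmp strict (-R') (Gk k p))"
    using p k \<open>0 < R\<close> \<open>0 < R'\<close> Q_eq_Gp_square[OF k, of p] Q_eq_Gk_square[of p k]
    unfolding R_def R'_def
    by (intro cmp_band_transfer[OF pos(1,2)] Gp_nonneg_iff_Gk_nonpos) auto
  ultimately show ?thesis by blast
qed

lemma Tp_L:
  assumes "0 \<le> k" "k \<le> real n" "0 < L k" "L k < 1"
  shows "Tp (L k) = k"
  using cmp_limits_iff[OF assms, of False] cmp_limits_iff[OF assms, of True]
  by (simp add: cmp_def)

lemma Tm_U: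
  assumes "0 \<le> k" "k \<le> real n" "0 < U k" "U k < 1"
  shows "Tm (U k) = k"
  using cmp_limits_iff[OF assms, of False] cmp_limits_iff[OF assms, of True]
  by (simp add: cmp_def)

lemma L_eq_1_minus_U: "L k = 1 - U (real n - k)"
proof -
  have "rad_L (real n - k) = rad_L k"
    unfolding rad_L_def using real_n_pos by (simp add: field_simps)
  moreover have "k / N + 6*c*(1 - 2*k/N - w) / A
                 = 1 - ((N - k) / N + 6*c*(1 - 2*(N - k)/N + w) / A)"
    if "0 < N" "0 < A" for N A w :: real
    using that by (simp add: field_simps)
  moreover have "0 < 8*c + 9*real n" using real_n_pos c_pos by simp
  ultimately show ?thesis
    unfolding L_def U_def rad_L_def[symmetric] limit_denominators using real_n_pos by simp
qed

lemma U_pos: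
  assumes "0 \<le> k" "k \<le> real n" shows "0 < U k"
proof -
  have "6*real n*c \<le> 6*real n*c * sqrt (rad_L k)"
    using rad_L_ge_1[OF assms] real_n_pos c_pos by simp
  moreover have "6*real n*c - Gp k 0 = 12*(c*real n) - 4*(c*k) + 9*(real n*k)"
    unfolding Gp_def by (simp add: algebra_simps)
  moreover have "c * k \<le> c * real n" "0 \<le> real n * k" "0 < c * real n"
    using assms c_pos real_n_pos by simp_all
  ultimately have "0 < real n * (8*c + 9*real n) * (U k - 0)"
    unfolding U_scaled by linarith
  moreover have "0 < real n * (8*c + 9*real n)"
    using real_n_pos c_pos by simp
  ultimately show ?thesis
    using zero_less_mult_pos by fastforce
qed

lemma L_less_1: "0 \<le> k \<Longrightarrow> k \<le> real n \<Longrightarrow> L k < 1"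
  using U_pos[of "real n - k"] by (simp add: L_eq_1_minus_U)

lemma U_n: "U (real n) = 1"
  unfolding U_def using real_n_pos by simp

lemma L_0: "L 0 = 0"
  using U_n by (simp add: L_eq_1_minus_U)

lemma cmp_L_iff:
  "K \<le> n \<Longrightarrow> 0 < p \<Longrightarrow> p < 1 \<Longrightarrow> cmp strict (L K) p \<longleftrightarrow> cmp strict (real K) (Tp p)"
  using cmp_limits_iff[of "real K" p] by simp

lemma cmp_U_iff:
  "K \<le> n \<Longrightarrow> 0 < p \<Longrightarrow> p < 1 \<Longrightarrow> cmp strict p (U K) \<longleftrightarrow> cmp strict (Tm p) (real K)"
  using cmp_limits_iff[of "real K" p] by simp

section \<open>Coverage probability\<close>

definition covers :: "bool \<Rightarrow> real \<Rightarrow> nat \<Rightarrow> bool" where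
  "covers strict p K \<longleftrightarrow> cmp strict (L K) p \<and> cmp strict p (U K)"

lemma covers_iff:
  "K \<le> n \<Longrightarrow> 0 < p \<Longrightarrow> p < 1 \<Longrightarrow> covers strict p K \<longleftrightarrow> cmp strict (Tm p) K \<and> cmp strict K (Tp p)"
  unfolding covers_def using cmp_L_iff cmp_U_iff by blast

definition coverage :: "bool \<Rightarrow> real \<Rightarrow> real" where
  "coverage strict p = measure_pmf.prob (binomial_pmf n p) {K. covers strict p K}"

text \<open>\<open>crit_L False\<close> and \<open>crit_L True\<close> are the paper's \<open>C\<^sub>l\<close> and \<open>C\<^sub>l'\<close>, and similarly for
  \<open>crit_U\<close>; the integer bounds \<open>\<lceil>T\<^sup>-\<rceil>\<close>, \<open>\<lfloor>T\<^sup>-\<rfloor> + 1\<close>, \<open>\<lfloor>T\<^sup>+\<rfloor>\<close>, \<open>\<lceil>T\<^sup>+\<rceil> - 1\<close> are written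
  as comparisons of reals.\<close>

definition crit_L :: "bool \<Rightarrow> nat \<Rightarrow> real" where
  "crit_L strict k = measure_pmf.prob (binomial_pmf n (L k)) {K. cmp strict (Tm (L k)) K \<and> K < k}"

definition crit_U :: "bool \<Rightarrow> nat \<Rightarrow> real" where
  "crit_U strict k = measure_pmf.prob (binomial_pmf n (U k)) {K. k < K \<and> cmp strict K (Tp (U k))}"

definition critical_values :: "bool \<Rightarrow> real set" where
  "critical_values strict = {crit_L strict k | k. k \<le> n \<and> 0 < L k \<and> L k < 1}
                          \<union> {crit_U strict k | k. k \<le> n \<and> 0 < U k \<and> U k < 1}"

text \<open>The value \<open>1\<close> accounts for the end points \<open>p = 0\<close> and \<open>p = 1\<close>.\<close>

definition above_critical :: "bool \<Rightarrow> real \<Rightarrow> bool" where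
  "above_critical strict x \<longleftrightarrow> (\<exists>c \<in> insert 1 (critical_values strict). c \<le> x)"

lemma above_critical_mono: "above_critical strict x \<Longrightarrow> x \<le> y \<Longrightarrow> above_critical strict y"
  unfolding above_critical_def by (meson order_trans)

lemma above_critical_crit_L:
  assumes "k \<le> n" "0 < L k" "L k < 1" "{K. cmp strict (Tm (L k)) K \<and> K < k} \<inter> {..n} \<subseteq> B"
  shows "above_critical strict (measure_pmf.prob (binomial_pmf n (L k)) B)"
proof -
  have "crit_L strict k \<le> measure_pmf.prob (binomial_pmf n (L k)) B"
    unfolding crit_L_def using assms by (intro prob_binomial_pmf_mono) auto
  then show ?thesis
    unfolding above_critical_def critical_values_def using assms(1-3) by blast
qed

lemma above_critical_crit_U:
  assumes "k \<le> n" "0 < U k" "U k < 1" "{K. k < K \<and> cmp strict K (Tp (U k))} \<inter> {..n} \<subseteq> B"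
  shows "above_critical strict (measure_pmf.prob (binomial_pmf n (U k)) B)"
proof -
  have "crit_U strict k \<le> measure_pmf.prob (binomial_pmf n (U k)) B"
    unfolding crit_U_def using assms by (intro prob_binomial_pmf_mono) auto
  then show ?thesis
    unfolding above_critical_def critical_values_def using assms(1-3) by blast
qed

lemma above_critical_left:
  assumes p: "0 < p" "p < 1" and ab: "a \<le> b" "b \<le> n"
    and left: "1 \<le> a \<Longrightarrow> \<not> cmp strict p (U (a - 1))"
    and right: "b < n \<Longrightarrow> \<not> cmp strict (L (Suc b)) p"
  obtains r where "0 \<le> r" "r \<le> p"
    and "above_critical strict (measure_pmf.prob (binomial_pmf n r) {a..b})"
proof (cases "a = 0")
  case True
  then have "above_critical strict (measure_pmf.prob (binomial_pmf n 0) {a..b})"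
    unfolding above_critical_def by (simp add: prob_binomial_pmf_0)
  then show ?thesis
    using p by (intro that[of 0]) simp_all
next
  case False
  define r where "r = U (a - 1)"
  have r: "0 < r" "r \<le> p"
    using U_pos[of "real (a - 1)"] left False ab not_cmp_imp_le unfolding r_def by auto
  have "{K. a - 1 < K \<and> cmp strict K (Tp r)} \<inter> {..n} \<subseteq> {a..b}"
  proof
    fix K assume "K \<in> {K. a - 1 < K \<and> cmp strict K (Tp r)} \<inter> {..n}"
    then have K: "a - 1 < K" "cmp strict (real K) (Tp r)" "K \<le> n" by simp_all
    have "K \<le> b"
    proof (rule ccontr)
      assume "\<not> K \<le> b"
      then have "b < n" "real (Suc b) \<le> real K"
        using K by simp_all
      then have "cmp strict (real (Suc b)) (Tp r)"
        using K(2) le_cmp_trans by blast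
      then have "cmp strict (L (Suc b)) p"
        using cmp_L_iff[of "Suc b" r] r p \<open>b < n\<close> by (auto intro: cmp_le_trans)
      then show False
        using right \<open>b < n\<close> by blast
    qed
    then show "K \<in> {a..b}" using K(1) by simp
  qed
  then have "above_critical strict (measure_pmf.prob (binomial_pmf n r) {a..b})"
    unfolding r_def using r p ab by (intro above_critical_crit_U) (auto simp: r_def)
  then show ?thesis
    using r by (intro that[of r]) simp_all
qed

lemma above_critical_right:
  assumes p: "0 < p" "p < 1" and ab: "a \<le> b" "b \<le> n"
    and left: "1 \<le> a \<Longrightarrow> \<not> cmp strict p (U (a - 1))"
    and right: "b < n \<Longrightarrow> \<not> cmp strict (L (Suc b)) p"
  obtains s where "p \<le> s" "s \<le> 1"
    and "above_critical strict (measure_pmf.prob (binomial_pmf n s) {a..b})"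
proof (cases "b = n")
  case True
  then have "above_critical strict (measure_pmf.prob (binomial_pmf n 1) {a..b})"
    unfolding above_critical_def using ab by (simp add: prob_binomial_pmf_1)
  then show ?thesis
    using p by (intro that[of 1]) simp_all
next
  case False
  define s where "s = L (Suc b)"
  have s: "p \<le> s" "s < 1"
    using L_less_1[of "real (Suc b)"] right False ab not_cmp_imp_le unfolding s_def by auto
  have "{K. cmp strict (Tm s) K \<and> K < Suc b} \<inter> {..n} \<subseteq> {a..b}"
  proof
    fix K assume "K \<in> {K. cmp strict (Tm s) K \<and> K < Suc b} \<inter> {..n}"
    then have K: "cmp strict (Tm s) (real K)" "K < Suc b" by simp_all
    have "a \<le> K"
    proof (rule ccontr)
      assume "\<not> a \<le> K"
      then have "1 \<le> a" "cmp strict (Tm s) (real (a - 1))"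
        using K by (auto intro: cmp_le_trans)
      then have "cmp strict p (U (a - 1))"
        using cmp_U_iff[of "a - 1" s] s p ab by (auto intro: le_cmp_trans)
      then show False
        using left \<open>1 \<le> a\<close> by blast
    qed
    then show "K \<in> {a..b}" using K(2) by simp
  qed
  then have "above_critical strict (measure_pmf.prob (binomial_pmf n s) {a..b})"
    unfolding s_def using s p ab False by (intro above_critical_crit_L) (auto simp: s_def)
  then show ?thesis
    using s by (intro that[of s]) simp_all
qed

lemma above_critical_interval:
  assumes p: "0 < p" "p < 1" and ab: "a \<le> b" "b \<le> n"
    and "covers strict p a" "covers strict p b"
    and "1 \<le> a \<Longrightarrow> \<not> covers strict p (a - 1)"
    and "b < n \<Longrightarrow> \<not> covers strict p (Suc b)"
  shows "above_critical strict (measure_pmf.prob (binomial_pmf n p) {a..b})"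
proof -
  have a: "cmp strict (Tm p) (real a)" and b: "cmp strict (real b) (Tp p)"
    using assms covers_iff by auto
  have left: "\<not> cmp strict p (U (a - 1))" if "1 \<le> a"
  proof -
    have "cmp strict (real (a - 1)) (Tp p)"
      using ab b le_cmp_trans[of "real (a - 1)" "real b"] by simp
    then show ?thesis
      using assms(7)[OF that] covers_iff[of "a - 1" p] cmp_U_iff[of "a - 1" p] p ab by auto
  qed
  have right: "\<not> cmp strict (L (Suc b)) p" if "b < n"
  proof -
    have "cmp strict (Tm p) (real (Suc b))"
      using ab a cmp_le_trans[of _ "Tm p" "real a" "real (Suc b)"] by simp
    then show ?thesis
      using assms(8)[OF that] covers_iff[of "Suc b" p] cmp_L_iff[of "Suc b" p] p that by auto
  qed
  obtain r where r: "0 \<le> r" "r \<le> p"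
    "above_critical strict (measure_pmf.prob (binomial_pmf n r) {a..b})"
    using above_critical_left[OF p ab left right] .
  obtain s where s: "p \<le> s" "s \<le> 1"
    "above_critical strict (measure_pmf.prob (binomial_pmf n s) {a..b})"
    using above_critical_right[OF p ab left right] .
  show ?thesis
    using prob_binomial_pmf_quasiconcave[OF ab r(1,2) s(1,2)] r(3) s(3)
    by (metis above_critical_mono min_def)
qed

lemma above_critical_uncovered:
  assumes p: "0 < p" "p < 1" and uncovered: "\<And>K. K \<le> n \<Longrightarrow> \<not> covers strict p K"
  shows "above_critical strict 0"
proof -
  define K0 where "K0 = Max {K. K \<le> n \<and> cmp strict (L K) p}"
  have "0 \<in> {K. K \<le> n \<and> cmp strict (L K) p}"
    using L_0 p by (simp add: cmp_if_less)
  then have "K0 \<in> {K. K \<le> n \<and> cmp strict (L K) p}"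
    unfolding K0_def by (intro Max_in) auto
  then have K0: "K0 \<le> n" "U K0 \<le> p"
    using uncovered[of K0] not_cmp_imp_le unfolding covers_def by auto
  then have "K0 < n"
    using U_n p by (cases "K0 = n") auto
  then have not_L: "\<not> cmp strict (L (Suc K0)) p"
    using Max_ge[of "{K. K \<le> n \<and> cmp strict (L K) p}" "Suc K0"] unfolding K0_def[symmetric] by auto
  have "{K. K0 < K \<and> cmp strict K (Tp (U K0))} \<inter> {..n} \<subseteq> {}"
  proof
    fix K assume "K \<in> {K. K0 < K \<and> cmp strict K (Tp (U K0))} \<inter> {..n}"
    then have "cmp strict (real (Suc K0)) (Tp (U K0))"
      using le_cmp_trans[of "real (Suc K0)" "real K"] by simp
    then have "cmp strict (L (Suc K0)) p"
      using cmp_L_iff[of "Suc K0" "U K0"] U_pos[of "real K0"] \<open>K0 < n\<close> K0 p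
      by (auto intro: cmp_le_trans)
    then show "K \<in> {}"
      using not_L by blast
  qed
  then have "above_critical strict (measure_pmf.prob (binomial_pmf n (U K0)) {})"
    using K0 U_pos[of "real K0"] p by (intro above_critical_crit_U) auto
  then show ?thesis
    by simp
qed

lemma coverage_above_critical:
  assumes p: "0 < p" "p < 1"
  shows "above_critical strict (coverage strict p)"
proof (cases "\<exists>K\<le>n. covers strict p K")
  case False
  then have "above_critical strict 0"
    using above_critical_uncovered[OF p] by auto
  then show ?thesis
    by (rule above_critical_mono) (simp add: coverage_def)
next
  case True
  define S where "S = {K. K \<le> n \<and> covers strict p K}"
  define a where "a = Min S"
  define b where "b = Max S"
  have "finite S" "S \<noteq> {}"
    using True unfolding S_def by auto
  then have "a \<in> S" "b \<in> S"
    unfolding a_def b_def by (simp_all add: Min_in Max_in)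
  moreover have "a \<le> b"
    unfolding a_def using Min_le[OF \<open>finite S\<close> \<open>b \<in> S\<close>] .
  ultimately have ab: "a \<le> b" "b \<le> n" "covers strict p a" "covers strict p b"
    unfolding S_def by auto
  have "{a..b} \<subseteq> S"
  proof
    fix K assume "K \<in> {a..b}"
    then have "real a \<le> real K" "real K \<le> real b" "K \<le> n" using ab by auto
    moreover have "cmp strict (Tm p) (real a)" "cmp strict (real b) (Tp p)"
      using covers_iff[of a p strict] covers_iff[of b p strict] ab p by simp_all
    ultimately have "cmp strict (Tm p) (real K)" "cmp strict (real K) (Tp p)"
      using cmp_le_trans le_cmp_trans by blast+
    then show "K \<in> S"
      unfolding S_def using covers_iff[of K p strict] \<open>K \<le> n\<close> p by simp
  qed
  then have "measure_pmf.prob (binomial_pmf n p) {a..b} \<le> coverage strict p"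
    unfolding coverage_def S_def using p by (intro prob_binomial_pmf_mono) auto
  moreover have "\<not> covers strict p (a - 1)" if "1 \<le> a"
  proof
    assume "covers strict p (a - 1)"
    then have "a - 1 \<in> S" unfolding S_def using ab by simp
    then have "a \<le> a - 1" unfolding a_def by (rule Min_le[OF \<open>finite S\<close>])
    then show False using that by simp
  qed
  moreover have "\<not> covers strict p (Suc b)" if "b < n"
  proof
    assume "covers strict p (Suc b)"
    then have "Suc b \<in> S" unfolding S_def using that by simp
    then have "Suc b \<le> b" unfolding b_def by (rule Max_ge[OF \<open>finite S\<close>])
    then show False by simp
  qed
  ultimately show ?thesis
    using above_critical_interval[OF p ab] above_critical_mono by blast
qed

lemma bdd_below_coverage: "bdd_below (coverage strict ` A)"
  by (intro bdd_belowI2[of _ 0]) (simp add: coverage_def)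

lemma INF_coverage_le_limit:
  assumes F: "F \<noteq> bot" "F \<le> at s" and s: "0 < s" "s < 1"
    and ev: "eventually (\<lambda>q. q \<in> {0<..<1} \<and> (\<forall>K\<in>{..n}. covers strict q K \<longrightarrow> K \<in> T)) F"
  shows "(INF p\<in>{0<..<1}. coverage strict p) \<le> measure_pmf.prob (binomial_pmf n s) T"
proof (rule INF_le_limit[OF F(1) bdd_below_coverage])
  show "eventually (\<lambda>q. q \<in> {0<..<1} \<and> coverage strict q \<le> measure_pmf.prob (binomial_pmf n q) T) F"
    using ev by eventually_elim (auto simp: coverage_def intro!: prob_binomial_pmf_mono)
  show "((\<lambda>q. measure_pmf.prob (binomial_pmf n q) T) \<longlongrightarrow> measure_pmf.prob (binomial_pmf n s) T) F"
    using tendsto_mono[OF F(2) tendsto_prob_binomial_pmf[OF s]] .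
qed

lemma eventually_covers_at_left:
  assumes "0 < s"
  shows "eventually (\<lambda>q. covers False q K \<longrightarrow> L K < s \<and> s \<le> U K) (at_left s)"
proof -
  have "eventually (\<lambda>q. q < s \<and> (U K < s \<longrightarrow> U K < q)) (at_left s)"
  proof (cases "U K < s")
    case True
    show ?thesis
      using eventually_at_left_real[OF True] by eventually_elim auto
  next
    case False
    show ?thesis
      using eventually_at_left_real[OF assms] by eventually_elim (use False in auto)
  qed
  then show ?thesis
    by eventually_elim (auto simp: covers_def cmp_def)
qed

lemma eventually_covers_at_right:
  assumes "s < 1"
  shows "eventually (\<lambda>q. covers False q K \<longrightarrow> L K \<le> s \<and> s < U K) (at_right s)"
proof -
  have "eventually (\<lambda>q. s < q \<and> (s < L K \<longrightarrow> q < L K)) (at_right s)"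
  proof (cases "s < L K")
    case True
    show ?thesis
      using eventually_at_right_real[OF True] by eventually_elim auto
  next
    case False
    show ?thesis
      using eventually_at_right_real[OF assms] by eventually_elim (use False in auto)
  qed
  then show ?thesis
    by eventually_elim (auto simp: covers_def cmp_def)
qed

text \<open>For the closed interval a critical value is a one-sided limit of the coverage
  probability; for the open interval it is a value of it.\<close>

lemma INF_coverage_le_crit_L:
  assumes k: "k \<le> n" "0 < L k" "L k < 1"
  shows "(INF p\<in>{0<..<1}. coverage strict p) \<le> crit_L strict k"
proof -
  define s where "s = L k"
  define T where "T = {K. cmp strict (Tm s) (real K) \<and> K < k}"
  have s: "0 < s" "s < 1" and Tp_s: "Tp s = real k"
    using k Tp_L unfolding s_def by simp_all
  have T: "K \<in> T \<longleftrightarrow> cmp strict (Tm s) (real K) \<and> cmp True (real K) (Tp s)" for K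
    unfolding T_def Tp_s by (simp add: cmp_def)
  have crit: "crit_L strict k = measure_pmf.prob (binomial_pmf n s) T"
    unfolding crit_L_def T_def s_def ..
  show ?thesis
  proof (cases strict)
    case True
    have "{K. covers strict s K} \<inter> {..n} = T \<inter> {..n}"
      using covers_iff[of _ s strict] s True T by auto
    then have "coverage strict s = crit_L strict k"
      unfolding coverage_def crit using s by (intro prob_binomial_pmf_cong) auto
    then show ?thesis
      using s bdd_below_coverage by (metis cINF_lower greaterThanLessThan_iff)
  next
    case False
    have "eventually (\<lambda>q. \<forall>K\<in>{..n}. covers False q K \<longrightarrow> L K < s \<and> s \<le> U K) (at_left s)"
      using eventually_covers_at_left[OF s(1)] by (intro eventually_ball_finite) auto
    moreover have "eventually (\<lambda>q. q \<in> {0<..<s}) (at_left s)"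
      using s(1) by (rule eventually_at_left_real)
    ultimately have
      "eventually (\<lambda>q. q \<in> {0<..<1} \<and> (\<forall>K\<in>{..n}. covers strict q K \<longrightarrow> K \<in> T)) (at_left s)"
    proof eventually_elim
      case (elim q)
      have "K \<in> T" if "K \<le> n" "L K < s" "s \<le> U K" for K
        using that cmp_L_iff[of K s True] cmp_U_iff[of K s False] s False T by (simp add: cmp_def)
      then show ?case
        using elim s False by auto
    qed
    then show ?thesis
      unfolding crit by (rule INF_coverage_le_limit[rotated 2, OF s]) (simp_all add: at_le)
  qed
qed

lemma INF_coverage_le_crit_U:
  assumes k: "k \<le> n" "0 < U k" "U k < 1"
  shows "(INF p\<in>{0<..<1}. coverage strict p) \<le> crit_U strict k"
proof -
  define s where "s = U k"
  define T where "T = {K. k < K \<and> cmp strict (real K) (Tp s)}"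
  have s: "0 < s" "s < 1" and Tm_s: "Tm s = real k"
    using k Tm_U unfolding s_def by simp_all
  have T: "K \<in> T \<longleftrightarrow> cmp True (Tm s) (real K) \<and> cmp strict (real K) (Tp s)" for K
    unfolding T_def Tm_s by (simp add: cmp_def)
  have crit: "crit_U strict k = measure_pmf.prob (binomial_pmf n s) T"
    unfolding crit_U_def T_def s_def ..
  show ?thesis
  proof (cases strict)
    case True
    have "{K. covers strict s K} \<inter> {..n} = T \<inter> {..n}"
      using covers_iff[of _ s strict] s True T by auto
    then have "coverage strict s = crit_U strict k"
      unfolding coverage_def crit using s by (intro prob_binomial_pmf_cong) auto
    then show ?thesis
      using s bdd_below_coverage by (metis cINF_lower greaterThanLessThan_iff)
  next
    case False
    have "eventually (\<lambda>q. \<forall>K\<in>{..n}. covers False q K \<longrightarrow> L K \<le> s \<and> s < U K) (at_right s)"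
      using eventually_covers_at_right[OF s(2)] by (intro eventually_ball_finite) auto
    moreover have "eventually (\<lambda>q. q \<in> {s<..<1}) (at_right s)"
      using s(2) by (rule eventually_at_right_real)
    ultimately have
      "eventually (\<lambda>q. q \<in> {0<..<1} \<and> (\<forall>K\<in>{..n}. covers strict q K \<longrightarrow> K \<in> T)) (at_right s)"
    proof eventually_elim
      case (elim q)
      have "K \<in> T" if "K \<le> n" "L K \<le> s" "s < U K" for K
        using that cmp_L_iff[of K s False] cmp_U_iff[of K s True] s False T by (simp add: cmp_def)
      then show ?case
        using elim s False by auto
    qed
    then show ?thesis
      unfolding crit by (rule INF_coverage_le_limit[rotated 2, OF s]) (simp_all add: at_le)
  qed
qed

lemma finite_critical_values: "finite (critical_values strict)"
proof -
  have "critical_values strict \<subseteq> crit_L strict ` {..n} \<union> crit_U strict ` {..n}"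
    unfolding critical_values_def by auto
  then show ?thesis
    by (rule finite_subset) simp
qed

lemma INF_coverage_eq_Min_critical_values:
  assumes "critical_values strict \<noteq> {}"
  shows "(INF p\<in>{0<..<1}. coverage strict p) = Min (critical_values strict)"
proof -
  have "(INF p\<in>{0<..<1}. coverage strict p) = Min (insert 1 (critical_values strict))"
  proof (rule INF_eq_Min_of_bounds)
    show "\<exists>c\<in>insert 1 (critical_values strict). c \<le> coverage strict p" if "p \<in> {0<..<1}" for p
      using coverage_above_critical[of p strict] that unfolding above_critical_def by simp
    show "(INF p\<in>{0<..<1}. coverage strict p) \<le> c" if "c \<in> insert 1 (critical_values strict)" for c
    proof (cases "c = 1")
      case True
      have "(INF p\<in>{0<..<1}. coverage strict p) \<le> coverage strict (1/2)"
        by (intro cINF_lower bdd_below_coverage) simp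
      also have "\<dots> \<le> 1"
        unfolding coverage_def by simp
      finally show ?thesis using True by simp
    next
      case False
      then show ?thesis
        using that INF_coverage_le_crit_L INF_coverage_le_crit_U
        unfolding critical_values_def by auto
    qed
  qed (use finite_critical_values in auto)
  moreover have "Min (critical_values strict) \<le> 1"
  proof -
    obtain c where "c \<in> critical_values strict" using assms by blast
    moreover have "c \<le> 1" if "c \<in> critical_values strict" for c
      using that unfolding critical_values_def crit_L_def crit_U_def by auto
    ultimately show ?thesis
      using Min_le[OF finite_critical_values] order_trans by blast
  qed
  moreover have "Min (insert 1 (critical_values strict)) = min 1 (Min (critical_values strict))"
    using finite_critical_values assms by (rule Min_insert)
  ultimately show ?thesis
    by simp
qed

end

lemma floor_add_one_le_iff: "\<lfloor>x\<rfloor> + 1 \<le> int K \<longleftrightarrow> x < real K"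
proof -
  have "\<lfloor>x\<rfloor> + 1 \<le> int K \<longleftrightarrow> \<lfloor>x\<rfloor> < int K" by linarith
  then show ?thesis by (simp add: floor_less_iff)
qed

theorem theorem2:
  fixes n :: nat and \<delta> :: real
  assumes "n \<ge> 1" and "0 < \<delta>" and "\<delta> < 1"
    and "\<exists>k\<le>n. (0 < confL n \<delta> k \<and> confL n \<delta> k < 1) \<or>
                 (0 < confU n \<delta> k \<and> confU n \<delta> k < 1)"
  shows "(INF p\<in>{0<..<1::real}. measure_pmf.prob (binomial_pmf n p)
            {K. confL n \<delta> K \<le> p \<and> p \<le> confU n \<delta> K})
         = Min ({Cl n \<delta> k | k. k \<le> n \<and> 0 < confL n \<delta> k \<and> confL n \<delta> k < 1}
              \<union> {Cu n \<delta> k | k. k \<le> n \<and> 0 < confU n \<delta> k \<and> confU n \<delta> k < 1})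
         \<and> (INF p\<in>{0<..<1::real}. measure_pmf.prob (binomial_pmf n p)
            {K. confL n \<delta> K < p \<and> p < confU n \<delta> K})
         = Min ({Cl' n \<delta> k | k. k \<le> n \<and> 0 < confL n \<delta> k \<and> confL n \<delta> k < 1}
              \<union> {Cu' n \<delta> k | k. k \<le> n \<and> 0 < confU n \<delta> k \<and> confU n \<delta> k < 1})"
proof -
  have "0 < ln (2/\<delta>)" using assms(2,3) by simp
  then interpret confidence_limits n "ln (2/\<delta>)"
    using assms(1) by unfold_locales
  have limits: "confL n \<delta> k = L k" "confU n \<delta> k = U k" "Tminus n \<delta> = Tm" "Tplus n \<delta> = Tp" for k
    unfolding confL_def L_def confU_def U_def Tminus_def Tm_def Tplus_def Tp_def
    by (simp_all add: fun_eq_iff)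
  have "Cl n \<delta> k = crit_L False k" "Cl' n \<delta> k = crit_L True k"
       "Cu n \<delta> k = crit_U False k" "Cu' n \<delta> k = crit_U True k" for k
    unfolding Cl_def Cl'_def Cu_def Cu'_def crit_L_def crit_U_def limits
    by (auto simp: cmp_def ceiling_le_iff le_floor_iff floor_add_one_le_iff less_ceiling_iff
             intro!: arg_cong[where f = "measure_pmf.prob _"])
  moreover have "{K. confL n \<delta> K \<le> p \<and> p \<le> confU n \<delta> K} = {K. covers False p K}"
                "{K. confL n \<delta> K < p \<and> p < confU n \<delta> K} = {K. covers True p K}" for p
    unfolding limits covers_def cmp_def by simp_all
  ultimately show ?thesis
    using INF_coverage_eq_Min_critical_values[of False] INF_coverage_eq_Min_critical_values[of True]
      assms(4)
    unfolding coverage_def critical_values_def limits by auto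
qed

end
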